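(* Let $\mathbf{F}$ be a flat strong quasi-MV* algebra. Then $x\oplus y=0$ for all $x,y\in F$.
   Context: A quasi-MV* algebra is an algebra $\langle A;\oplus,-,{}^{+},{}^{-},0,1\rangle$ of type $\langle 2,1,1,1,0,0\rangle$ (${}^+,{}^-$ bind more tightly than $-$, which binds more tightly than $\oplus$; $-1$ denotes $-(1)$) such that for all $x,y,z$: (1) $x\oplus y=y\oplus x$; (2) $(1\oplus x)\oplus(y\oplus(1\oplus z))=((1\oplus x)\oplus y)\oplus(1\oplus z)$; (3) $(x\oplus 1)\oplus 1=1$; (4) $(x\oplus y)\oplus 0=x\oplus y$; (5) $x^{+}\oplus 0=(x\oplus 0)^{+}=1\oplus(-1\oplus x)$ and $x^{-}\oplus 0=(x\oplus 0)^{-}=-1\oplus(1\oplus x)$; (6) $x\oplus y=(x^{+}\oplus y^{+})\oplus(x^{-}\oplus y^{-})$; (7) $0=-0$; (8) $x\oplus(-x)=0$; (9) $-(x\oplus y)=(-x)\oplus(-y)$; (10) $-(-x)=x$; (11) $(-x\oplus(x\oplus y))^{+}=-x^{+}\oplus(x^{+}\oplus y^{+})$; (12) $x\vee y=y\vee x$; (13) $x\vee(y\vee z)=(x\vee y)\vee z$; (14) $x\oplus(y\vee z)=(x\oplus y)\vee(x\oplus z)$; where $x\vee y:=(x^{+}\oplus(-x^{+}\oplus y^{+})^{+})\oplus(x^{-}\oplus(-x^{-}\oplus y^{-})^{+})$. A strong quasi-MV* algebra is a quasi-MV* algebra satisfying $x^+=x^+\oplus 0$ and $x^-=x^-\oplus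 0$ for all $x$; it is flat if $0=1$. *)

theory Defs
  imports Main
begin

text \<open>An algebra (A; oplus, neg, pl, mi, zero, one) of type (2,1,1,1,0,0) whose
carrier is the whole type 'a. neg is the unary minus, pl is x^+, mi is x^-.\<close>

definition qmv_join ::
  "('a \<Rightarrow> 'a \<Rightarrow> 'a) \<Rightarrow> ('a \<Rightarrow> 'a) \<Rightarrow> ('a \<Rightarrow> 'a) \<Rightarrow> ('a \<Rightarrow> 'a) \<Rightarrow> 'a \<Rightarrow> 'a \<Rightarrow> 'a" where
  "qmv_join opl neg pl mi x y =
     opl (opl (pl x) (pl (opl (neg (pl x)) (pl y))))
         (opl (mi x) (pl (opl (neg (mi x)) (mi y))))"

definition quasi_MV_star ::
  "('a \<Rightarrow> 'a \<Rightarrow> 'a) \<Rightarrow> ('a \<Rightarrow> 'a) \<Rightarrow> ('a \<Rightarrow> 'a) \<Rightarrow> ('a \<Rightarrow> 'a) \<Rightarrow> 'a \<Rightarrow> 'a \<Rightarrow> bool" where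
  "quasi_MV_star opl neg pl mi z u \<longleftrightarrow>
    (let join = qmv_join opl neg pl mi in
    (\<forall>x y. opl x y = opl y x) \<and>
    (\<forall>x y w. opl (opl u x) (opl y (opl u w)) = opl (opl (opl u x) y) (opl u w)) \<and>
    (\<forall>x. opl (opl x u) u = u) \<and>
    (\<forall>x y. opl (opl x y) z = opl x y) \<and>
    (\<forall>x. opl (pl x) z = pl (opl x z) \<and> pl (opl x z) = opl u (opl (neg u) x)) \<and>
    (\<forall>x. opl (mi x) z = mi (opl x z) \<and> mi (opl x z) = opl (neg u) (opl u x)) \<and>
    (\<forall>x y. opl x y = opl (opl (pl x) (pl y)) (opl (mi x) (mi y))) \<and>
    z = neg z \<and>
    (\<forall>x. opl x (neg x) = z) \<and>
    (\<forall>x y. neg (opl x y) = opl (neg x) (neg y)) \<and>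
    (\<forall>x. neg (neg x) = x) \<and>
    (\<forall>x y. pl (opl (neg x) (opl x y)) = opl (neg (pl x)) (opl (pl x) (pl y))) \<and>
    (\<forall>x y. join x y = join y x) \<and>
    (\<forall>x y w. join x (join y w) = join (join x y) w) \<and>
    (\<forall>x y w. opl x (join y w) = join (opl x y) (opl x w)))"

definition strong_quasi_MV_star ::
  "('a \<Rightarrow> 'a \<Rightarrow> 'a) \<Rightarrow> ('a \<Rightarrow> 'a) \<Rightarrow> ('a \<Rightarrow> 'a) \<Rightarrow> ('a \<Rightarrow> 'a) \<Rightarrow> 'a \<Rightarrow> 'a \<Rightarrow> bool" where
  "strong_quasi_MV_star opl neg pl mi z u \<longleftrightarrow>
    quasi_MV_star opl neg pl mi z u \<and>
    (\<forall>x. pl x = opl (pl x) z) \<and> (\<forall>x. mi x = opl (mi x) z)"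

definition flat_strong_quasi_MV_star ::
  "('a \<Rightarrow> 'a \<Rightarrow> 'a) \<Rightarrow> ('a \<Rightarrow> 'a) \<Rightarrow> ('a \<Rightarrow> 'a) \<Rightarrow> ('a \<Rightarrow> 'a) \<Rightarrow> 'a \<Rightarrow> 'a \<Rightarrow> bool" where
  "flat_strong_quasi_MV_star opl neg pl mi z u \<longleftrightarrow>
    strong_quasi_MV_star opl neg pl mi z u \<and> z = u"

end

theory Submission
  imports Defs
begin

text \<open>If 0 = 1, axioms (3) and (4) give x \<oplus> 0 = (x \<oplus> 0) \<oplus> 0 = 0.
Strongness then forces x^+ = x^+ \<oplus> 0 = 0 and likewise x^- = 0,
so axiom (6) yields x \<oplus> y = (0 \<oplus> 0) \<oplus> (0 \<oplus> 0) = 0.\<close>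

lemma quasi_MV_star_flat_add_zero:
  assumes "quasi_MV_star opl neg pl mi z z"
  shows "opl x z = z"
proof -
  from assms have "opl (opl x z) z = z" and "opl (opl x z) z = opl x z"
    unfolding quasi_MV_star_def Let_def by auto
  then show ?thesis by simp
qed

lemma strong_quasi_MV_star_flat_pl_mi_zero:
  assumes "strong_quasi_MV_star opl neg pl mi z z"
  shows "pl x = z" and "mi x = z"
proof -
  have add_zero: "opl y z = z" for y
    using assms unfolding strong_quasi_MV_star_def
    by (blast intro: quasi_MV_star_flat_add_zero)
  from assms have "pl x = opl (pl x) z" and "mi x = opl (mi x) z"
    unfolding strong_quasi_MV_star_def by auto
  then show "pl x = z" and "mi x = z"
    using add_zero by simp_all
qed

theorem lemma3p1:
  fixes opl :: "'a \<Rightarrow> 'a \<Rightarrow> 'a" and neg pl mi :: "'a \<Rightarrow> 'a" and z u :: 'a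
  assumes "flat_strong_quasi_MV_star opl neg pl mi z u"
  shows "\<forall>x y. opl x y = z"
proof (intro allI)
  fix x y
  from assms have strong: "strong_quasi_MV_star opl neg pl mi z z"
    unfolding flat_strong_quasi_MV_star_def by auto
  then have qmv: "quasi_MV_star opl neg pl mi z z"
    unfolding strong_quasi_MV_star_def by blast
  then have "opl x y = opl (opl (pl x) (pl y)) (opl (mi x) (mi y))"
    unfolding quasi_MV_star_def Let_def by blast
  also have "\<dots> = opl (opl z z) (opl z z)"
    using strong_quasi_MV_star_flat_pl_mi_zero[OF strong] by simp
  also have "\<dots> = z"
    using quasi_MV_star_flat_add_zero[OF qmv] by simp
  finally show "opl x y = z" .
qed

end
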